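(* Let $\mathcal{I}$ be a set of $n$ intervals (circular arcs) on the unit circle, and let $G=(\mathcal{I},E)$ be the associated intersection graph. Then $|E|=O(\alpha\,\omega^2)$, where $\omega$ is the maximum depth of $\mathcal{I}$ and $\alpha$ is the size of the largest independent set in $G$. Furthermore, this upper bound on $|E|$ is tight (there are such families with $\Omega(\alpha\,\omega^2)$ edges).
   Context: The depth of a point of the circle is the number of intervals of $\mathcal{I}$ containing it; the maximum depth of $\mathcal{I}$ is the maximum depth over all points of the circle. Two intervals are adjacent in the intersection graph if they intersect. *)

theory Defs
  imports "HOL-Analysis.Analysis"
begin

text \<open>Points of the unit circle are complex numbers of modulus 1. A (closed) interval,
i.e. circular arc, is the image of a real interval [a, a+l] of angles under cis,
with 0 <= l <= 2*pi (l = 0 gives a single point, l = 2*pi the whole circle).\<close>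

definition circ_arc :: "real \<Rightarrow> real \<Rightarrow> complex set" where
  "circ_arc a l = cis ` {a..a+l}"

definition is_arc :: "complex set \<Rightarrow> bool" where
  "is_arc A \<longleftrightarrow> (\<exists>a l. 0 \<le> l \<and> l \<le> 2*pi \<and> A = circ_arc a l)"

definition depth :: "complex set set \<Rightarrow> complex \<Rightarrow> nat" where
  "depth F z = card {A \<in> F. z \<in> A}"

definition max_depth :: "complex set set \<Rightarrow> nat" where
  "max_depth F = Max (depth F ` sphere 0 1)"

definition ig_edges :: "complex set set \<Rightarrow> complex set set set" where
  "ig_edges F = {{A, B} | A B. A \<in> F \<and> B \<in> F \<and> A \<noteq> B \<and> A \<inter> B \<noteq> {}}"

definition indep_number :: "complex set set \<Rightarrow> nat" where
  "indep_number F = Max {card S | S. S \<subseteq> F \<and> pairwise (\<lambda>A B. A \<inter> B = {}) S}"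

end

theory Submission
  imports Defs
begin

text \<open>Of two intersecting arcs, one contains the starting point of the other; charging each
  edge to that point gives at most n \<omega> edges for n arcs. Cutting the circle at one point,
  at most \<omega> arcs contain the cut and the others become real intervals, among which the
  greedy choice by leftmost right end yields a disjoint subfamily of size at least a
  1/\<omega> fraction; hence n \<le> 2 \<alpha> \<omega> and the number of edges is at most
  2 \<alpha> \<omega>^2. Conversely, \<alpha> far apart clusters of \<omega> nested arcs with a
  common starting point realise \<alpha> \<omega>(\<omega> - 1)/2 edges.\<close>

lemma cis_add_2pi_multiple [simp]: "cis (x + 2 * pi * of_int k) = cis x"
  by (metis cis_mult cis_multiple_2pi Ints_of_int mult.right_neutral)

lemma cis_eq_cis_obtain_2pi_multiple:
  assumes "cis x = cis y"
  obtains k :: int where "y = x + 2 * pi * of_int k"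
proof -
  have "sin y = sin x \<and> cos y = cos x"
    using assms by (metis cis.sel)
  then show ?thesis
    using sin_cos_eq_iff that by blast
qed

lemma cis_eq_cis_imp_eq:
  assumes "cis x = cis y" "\<bar>x - y\<bar> < 2 * pi"
  shows "x = y"
proof -
  obtain k :: int where k: "y = x + 2 * pi * of_int k"
    using cis_eq_cis_obtain_2pi_multiple[OF assms(1)] .
  with assms(2) have "\<bar>of_int k :: real\<bar> < 1"
    by (simp add: abs_mult)
  then have "k = 0" by linarith
  with k show ?thesis by simp
qed

lemma circ_arc_add_2pi_multiple: "circ_arc (a + 2 * pi * of_int k) l = circ_arc a l"
proof -
  have "{a + 2 * pi * of_int k..a + 2 * pi * of_int k + l} = plus (2 * pi * of_int k) ` {a..a + l}"
    by (simp add: add_ac)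
  then have "circ_arc (a + 2 * pi * of_int k) l = (\<lambda>t. cis (t + 2 * pi * of_int k)) ` {a..a + l}"
    by (simp only: circ_arc_def image_image add.commute)
  also have "\<dots> = circ_arc a l"
    by (simp add: circ_arc_def)
  finally show ?thesis .
qed

lemma cis_mem_circ_arc_iff:
  assumes "\<theta> \<le> a" "a + l < \<theta> + 2 * pi" "\<theta> \<le> t" "t < \<theta> + 2 * pi"
  shows "cis t \<in> circ_arc a l \<longleftrightarrow> a \<le> t \<and> t \<le> a + l"
proof
  assume "cis t \<in> circ_arc a l"
  then obtain y where y: "a \<le> y" "y \<le> a + l" "cis t = cis y"
    by (auto simp: circ_arc_def)
  with assms have "t = y"
    by (intro cis_eq_cis_imp_eq) auto
  with y show "a \<le> t \<and> t \<le> a + l" by simp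
qed (auto simp: circ_arc_def)

lemma circ_arc_meet_imp_start_mem:
  assumes "circ_arc a l \<inter> circ_arc b m \<noteq> {}"
  shows "cis a \<in> circ_arc b m \<or> cis b \<in> circ_arc a l"
proof -
  obtain t s where t: "a \<le> t" "t \<le> a + l" and s: "b \<le> s" "s \<le> b + m" and "cis t = cis s"
    using assms by (auto simp: circ_arc_def)
  then obtain k :: int where k: "s = t + 2 * pi * of_int k"
    using cis_eq_cis_obtain_2pi_multiple by metis
  show ?thesis
  proof (cases "b \<le> a + 2 * pi * of_int k")
    case True
    with t s k have "a + 2 * pi * of_int k \<in> {b..b + m}" by auto
    then have "cis (a + 2 * pi * of_int k) \<in> circ_arc b m"
      unfolding circ_arc_def by (rule imageI)
    then show ?thesis by simp
  next
    case False
    with t s k have "b + 2 * pi * of_int (- k) \<in> {a..a + l}" by auto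
    then have "cis (b + 2 * pi * of_int (- k)) \<in> circ_arc a l"
      unfolding circ_arc_def by (rule imageI)
    then have "cis b \<in> circ_arc a l"
      by (simp only: cis_add_2pi_multiple)
    then show ?thesis ..
  qed
qed

lemma arc_avoiding_one_obtain_interval:
  assumes "is_arc A" "1 \<notin> A"
  obtains lo hi where "0 < lo" "lo \<le> hi" "hi < 2 * pi" "A = circ_arc lo (hi - lo)"
proof -
  obtain a l where l: "0 \<le> l" and A: "A = circ_arc a l"
    using assms(1) by (auto simp: is_arc_def)
  define a' where "a' = 2 * pi * frac (a / (2 * pi))"
  have "a' = a + 2 * pi * of_int (- \<lfloor>a / (2 * pi)\<rfloor>)"
    by (simp add: a'_def frac_def algebra_simps)
  with A have A': "A = circ_arc a' l"
    by (simp only: circ_arc_add_2pi_multiple)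
  have a': "0 \<le> a'" "a' < 2 * pi"
    using frac_lt_1 by (simp_all add: a'_def)
  have "a' \<noteq> 0"
  proof
    assume "a' = 0"
    with l have "cis 0 \<in> A"
      unfolding A' circ_arc_def by (intro imageI) simp
    with assms(2) show False by simp
  qed
  moreover have "a' + l < 2 * pi"
  proof (rule ccontr)
    assume "\<not> a' + l < 2 * pi"
    with a' have "cis (2 * pi) \<in> A"
      unfolding A' circ_arc_def by (intro imageI) simp
    with assms(2) show False by simp
  qed
  ultimately show ?thesis
    using that[of a' "a' + l"] a' l A' by simp
qed

lemma depth_le_max_depth:
  assumes "finite F" "z \<in> sphere 0 1"
  shows "depth F z \<le> max_depth F"
proof -
  have "depth F ` sphere 0 1 \<subseteq> {..card F}"
    unfolding depth_def using assms(1) by (auto intro: card_mono)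
  then have "finite (depth F ` sphere 0 1)"
    by (rule finite_subset) simp
  with assms(2) show ?thesis
    unfolding max_depth_def by simp
qed

lemma card_le_indep_number:
  assumes "finite F" "S \<subseteq> F" "pairwise (\<lambda>A B. A \<inter> B = {}) S"
  shows "card S \<le> indep_number F"
proof -
  have "{card S | S. S \<subseteq> F \<and> pairwise (\<lambda>A B. A \<inter> B = {}) S} \<subseteq> {..card F}"
    using assms(1) by (auto intro: card_mono)
  then have "finite {card S | S. S \<subseteq> F \<and> pairwise (\<lambda>A B. A \<inter> B = {}) S}"
    by (rule finite_subset) simp
  with assms show ?thesis
    unfolding indep_number_def by (intro Max_ge) auto
qed

lemma indep_number_pos:
  assumes "finite F" "F \<noteq> {}"
  shows "1 \<le> indep_number F"
proof -
  obtain A where "A \<in> F"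
    using assms(2) by blast
  then show ?thesis
    using card_le_indep_number[OF assms(1), of "{A}"] by simp
qed

lemma indep_number_eqI:
  assumes "S \<subseteq> F" "pairwise (\<lambda>A B. A \<inter> B = {}) S" "card S = k"
    and "\<And>S. S \<subseteq> F \<Longrightarrow> pairwise (\<lambda>A B. A \<inter> B = {}) S \<Longrightarrow> card S \<le> k"
  shows "indep_number F = k"
proof -
  have "{card S | S. S \<subseteq> F \<and> pairwise (\<lambda>A B. A \<inter> B = {}) S} \<subseteq> {..k}"
    using assms(4) by auto
  then show ?thesis
    unfolding indep_number_def using assms
    by (intro Max_eqI) (auto intro: finite_subset)
qed

lemma max_depth_eqI:
  assumes "z \<in> sphere 0 1" "depth F z = k" "\<And>z. depth F z \<le> k"
  shows "max_depth F = k"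
proof -
  have "depth F ` sphere 0 1 \<subseteq> {..k}"
    using assms(3) by auto
  then show ?thesis
    unfolding max_depth_def using assms
    by (intro Max_eqI) (auto intro: finite_subset)
qed

definition arc_clusters ::
    "nat \<Rightarrow> nat \<Rightarrow> (nat \<Rightarrow> nat \<Rightarrow> complex set) \<Rightarrow> (nat \<Rightarrow> complex) \<Rightarrow> bool" where
  "arc_clusters a w Arc centre \<longleftrightarrow>
     (\<forall>i<a. \<forall>j<w. centre i \<in> Arc i j) \<and>
     (\<forall>i<a. \<forall>i'<a. \<forall>j<w. \<forall>j'<w. \<forall>z. z \<in> Arc i j \<longrightarrow> z \<in> Arc i' j' \<longrightarrow> i = i') \<and>
     (\<forall>i<a. \<forall>j'<w. \<forall>j<j'. Arc i j \<noteq> Arc i j')"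

definition cluster_family :: "nat \<Rightarrow> nat \<Rightarrow> (nat \<Rightarrow> nat \<Rightarrow> complex set) \<Rightarrow> complex set set" where
  "cluster_family a w Arc = (\<lambda>(i, j). Arc i j) ` ({..<a} \<times> {..<w})"

lemma arc_clusters_centre_mem:
  "arc_clusters a w Arc centre \<Longrightarrow> i < a \<Longrightarrow> j < w \<Longrightarrow> centre i \<in> Arc i j"
  by (simp add: arc_clusters_def)

lemma arc_clusters_same_cluster:
  "arc_clusters a w Arc centre \<Longrightarrow> i < a \<Longrightarrow> i' < a \<Longrightarrow> j < w \<Longrightarrow> j' < w \<Longrightarrow>
    z \<in> Arc i j \<Longrightarrow> z \<in> Arc i' j' \<Longrightarrow> i = i'"
  unfolding arc_clusters_def by blast

lemma finite_cluster_family: "finite (cluster_family a w Arc)"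
  by (simp add: cluster_family_def)

lemma mem_cluster_family_iff: "A \<in> cluster_family a w Arc \<longleftrightarrow> (\<exists>i<a. \<exists>j<w. A = Arc i j)"
  by (auto simp: cluster_family_def)

lemma Arc_mem_cluster_family: "i < a \<Longrightarrow> j < w \<Longrightarrow> Arc i j \<in> cluster_family a w Arc"
  by (auto simp: mem_cluster_family_iff)

lemma Arc_eq_Arc_iff:
  assumes clusters: "arc_clusters a w Arc centre" and "i < a" "i' < a" "j < w" "j' < w"
  shows "Arc i j = Arc i' j' \<longleftrightarrow> i = i' \<and> j = j'"
proof
  assume eq: "Arc i j = Arc i' j'"
  then have "i = i'"
    using assms arc_clusters_centre_mem[OF clusters, of i j]
    by (intro arc_clusters_same_cluster[OF clusters, of i i' j j' "centre i"]) auto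
  moreover have "j = j'"
    using eq clusters assms \<open>i = i'\<close> unfolding arc_clusters_def by (metis linorder_neqE_nat)
  ultimately show "i = i' \<and> j = j'" ..
qed simp

lemma inj_on_Arc_pairs:
  assumes clusters: "arc_clusters a w Arc centre"
  shows "inj_on (\<lambda>(i, j). Arc i j) ({..<a} \<times> {..<w})"
  using Arc_eq_Arc_iff[OF clusters] by (intro inj_onI) auto

lemma card_Arc_image:
  assumes clusters: "arc_clusters a w Arc centre" and "i < a"
  shows "card (Arc i ` {..<w}) = w"
proof -
  have "Arc i ` {..<w} = (\<lambda>(i, j). Arc i j) ` ({i} \<times> {..<w})"
    by auto
  moreover have "inj_on (\<lambda>(i, j). Arc i j) ({i} \<times> {..<w})"
    using inj_on_Arc_pairs[OF clusters] by (rule inj_on_subset) (use assms(2) in auto)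
  ultimately show ?thesis
    by (simp add: card_image card_cartesian_product)
qed

lemma indep_number_cluster_family:
  assumes clusters: "arc_clusters a w Arc centre" and "0 < w"
  shows "indep_number (cluster_family a w Arc) = a"
proof (rule indep_number_eqI)
  show "(\<lambda>i. Arc i 0) ` {..<a} \<subseteq> cluster_family a w Arc"
    using assms by (auto intro: Arc_mem_cluster_family)
  show "pairwise (\<lambda>A B. A \<inter> B = {}) ((\<lambda>i. Arc i 0) ` {..<a})"
    using assms arc_clusters_same_cluster[OF clusters, of _ _ 0 0] by (auto simp: pairwise_def)
  have "inj_on (\<lambda>i. Arc i 0) {..<a}"
    using assms by (intro inj_onI) (simp add: Arc_eq_Arc_iff[OF clusters])
  then show "card ((\<lambda>i. Arc i 0) ` {..<a}) = a"
    by (simp add: card_image)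
next
  fix S assume S: "S \<subseteq> cluster_family a w Arc" "pairwise (\<lambda>A B. A \<inter> B = {}) S"
  have "finite S"
    using S(1) finite_cluster_family finite_subset by blast
  have "S \<subseteq> (\<Union>i<a. {A \<in> S. centre i \<in> A})"
    using S(1) arc_clusters_centre_mem[OF clusters] by (fastforce simp: mem_cluster_family_iff)
  then have "card S \<le> card (\<Union>i<a. {A \<in> S. centre i \<in> A})"
    using \<open>finite S\<close> by (intro card_mono) auto
  also have "\<dots> \<le> (\<Sum>i<a. card {A \<in> S. centre i \<in> A})"
    by (rule card_UN_le) simp
  also have "\<dots> \<le> (\<Sum>i<a. 1)"
  proof (rule sum_mono)
    fix i
    have "\<forall>A\<in>{A \<in> S. centre i \<in> A}. \<forall>B\<in>{A \<in> S. centre i \<in> A}. A = B"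
      using S(2) by (auto simp: pairwise_def)
    then show "card {A \<in> S. centre i \<in> A} \<le> 1"
      using \<open>finite S\<close> card_le_Suc0_iff_eq[of "{A \<in> S. centre i \<in> A}"] by simp
  qed
  finally show "card S \<le> a" by simp
qed

lemma depth_cluster_family_le:
  assumes clusters: "arc_clusters a w Arc centre"
  shows "depth (cluster_family a w Arc) z \<le> w"
proof (cases "{A \<in> cluster_family a w Arc. z \<in> A} = {}")
  case True
  then show ?thesis
    unfolding depth_def True by simp
next
  case False
  then obtain i0 j0 where ij0: "i0 < a" "j0 < w" "z \<in> Arc i0 j0"
    by (auto simp: mem_cluster_family_iff)
  have "{A \<in> cluster_family a w Arc. z \<in> A} \<subseteq> Arc i0 ` {..<w}"
  proof
    fix A assume "A \<in> {A \<in> cluster_family a w Arc. z \<in> A}"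
    then obtain i j where "i < a" "j < w" "A = Arc i j" "z \<in> A"
      by (auto simp: mem_cluster_family_iff)
    with ij0 show "A \<in> Arc i0 ` {..<w}"
      using arc_clusters_same_cluster[OF clusters, of i0 i j0 j z] by simp
  qed
  then have "depth (cluster_family a w Arc) z \<le> card (Arc i0 ` {..<w})"
    unfolding depth_def by (intro card_mono) auto
  also have "\<dots> \<le> w"
    using card_image_le[of "{..<w}" "Arc i0"] by simp
  finally show ?thesis .
qed

lemma depth_cluster_family_centre:
  assumes clusters: "arc_clusters a w Arc centre" and "0 < a"
  shows "depth (cluster_family a w Arc) (centre 0) = w"
proof -
  have "{A \<in> cluster_family a w Arc. centre 0 \<in> A} = Arc 0 ` {..<w}"
  proof
    show "{A \<in> cluster_family a w Arc. centre 0 \<in> A} \<subseteq> Arc 0 ` {..<w}"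
    proof
      fix A assume "A \<in> {A \<in> cluster_family a w Arc. centre 0 \<in> A}"
      then obtain i j where "i < a" "j < w" "A = Arc i j" "centre 0 \<in> A"
        by (auto simp: mem_cluster_family_iff)
      with assms show "A \<in> Arc 0 ` {..<w}"
        using arc_clusters_same_cluster[OF clusters, of i 0 j j "centre 0"]
          arc_clusters_centre_mem[OF clusters, of 0 j]
        by simp
    qed
    show "Arc 0 ` {..<w} \<subseteq> {A \<in> cluster_family a w Arc. centre 0 \<in> A}"
      using assms arc_clusters_centre_mem[OF clusters] Arc_mem_cluster_family by auto
  qed
  then show ?thesis
    using card_Arc_image[OF assms] by (simp add: depth_def)
qed

lemma card_ig_edges_cluster_family:
  assumes clusters: "arc_clusters a w Arc centre"
  shows "a * (w div 2) * (w - w div 2) \<le> card (ig_edges (cluster_family a w Arc))"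
proof -
  define h where "h = w div 2"
  define D where "D = {..<a} \<times> {..<h} \<times> {h..<w}"
  define pair where "pair = (\<lambda>(i, j, j'). {Arc i j, Arc i j'})"
  have "h \<le> w"
    by (simp add: h_def)
  have inter: "Arc i j \<noteq> Arc i j' \<and> Arc i j \<inter> Arc i j' \<noteq> {}"
    if "i < a" "j < h" "h \<le> j'" "j' < w" for i j j'
  proof -
    have "j < w"
      using that \<open>h \<le> w\<close> by simp
    then have "centre i \<in> Arc i j \<inter> Arc i j'"
      using that arc_clusters_centre_mem[OF clusters] by simp
    moreover have "Arc i j \<noteq> Arc i j'"
      using that \<open>j < w\<close> Arc_eq_Arc_iff[OF clusters] by simp
    ultimately show ?thesis by blast
  qed
  have pairs_edges: "pair ` D \<subseteq> ig_edges (cluster_family a w Arc)"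
  proof
    fix e assume "e \<in> pair ` D"
    then obtain i j j' where ijj: "i < a" "j < h" "h \<le> j'" "j' < w" "e = {Arc i j, Arc i j'}"
      by (auto simp: D_def pair_def)
    moreover have "Arc i j \<in> cluster_family a w Arc" "Arc i j' \<in> cluster_family a w Arc"
      using ijj \<open>h \<le> w\<close> by (simp_all add: Arc_mem_cluster_family)
    ultimately show "e \<in> ig_edges (cluster_family a w Arc)"
      unfolding ig_edges_def using inter[OF ijj(1-4)]
      by (intro CollectI exI[of _ "Arc i j"] exI[of _ "Arc i j'"]) blast
  qed
  have inj: "inj_on pair D"
  proof (rule inj_onI)
    fix x y assume xy: "x \<in> D" "y \<in> D" "pair x = pair y"
    obtain i j j' k l l' where "x = (i, j, j')" "y = (k, l, l')"
      by (metis prod_cases3)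
    with xy have x: "x = (i, j, j')" "i < a" "j < h" "h \<le> j'" "j' < w"
      and y: "y = (k, l, l')" "k < a" "l < h" "h \<le> l'" "l' < w"
      and eq: "{Arc i j, Arc i j'} = {Arc k l, Arc k l'}"
      by (simp_all add: D_def pair_def)
    have "j < w" "l < w"
      using x y \<open>h \<le> w\<close> by auto
    from eq consider "Arc i j = Arc k l" "Arc i j' = Arc k l'"
      | "Arc i j = Arc k l'" "Arc i j' = Arc k l"
      by (auto simp: doubleton_eq_iff)
    then show "x = y"
    proof cases
      case 1
      then show ?thesis
        using x y \<open>j < w\<close> \<open>l < w\<close> Arc_eq_Arc_iff[OF clusters] by simp
    next
      case 2
      then have "j = l'"
        using x y \<open>j < w\<close> Arc_eq_Arc_iff[OF clusters] by simp
      with x y show ?thesis by simp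
    qed
  qed
  have "ig_edges (cluster_family a w Arc) \<subseteq> Pow (cluster_family a w Arc)"
    unfolding ig_edges_def by blast
  then have "finite (ig_edges (cluster_family a w Arc))"
    using finite_cluster_family by (simp add: finite_subset)
  then have "card D \<le> card (ig_edges (cluster_family a w Arc))"
    by (rule card_inj_on_le[OF inj pairs_edges])
  then show ?thesis
    by (simp add: D_def h_def card_cartesian_product mult.assoc)
qed

lemma equally_spaced_window:
  assumes "i < a"
  shows "0 \<le> 2 * pi * real i / real a" "2 * pi * real i / real a + pi / real a < 2 * pi"
proof -
  have "pi * (2 * real i + 1) < pi * (2 * real a)"
    using assms by simp
  then show "0 \<le> 2 * pi * real i / real a" "2 * pi * real i / real a + pi / real a < 2 * pi"
    using assms by (simp_all add: field_simps)
qed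

lemma equally_spaced_windows_apart:
  assumes "i < i'" "i' < a"
  shows "2 * pi * real i / real a + pi / real a < 2 * pi * real i' / real a"
proof -
  have "0 < real a"
    using assms by simp
  have "pi * (2 * real i + 1) < 2 * pi * real i'"
    using assms by simp
  then have "pi * (2 * real i + 1) / real a < 2 * pi * real i' / real a"
    using \<open>0 < real a\<close> by (rule divide_strict_right_mono)
  moreover have "2 * pi * real i / real a + pi / real a = pi * (2 * real i + 1) / real a"
    using \<open>0 < real a\<close> by (simp add: field_simps)
  ultimately show ?thesis
    by simp
qed

text \<open>The arcs of cluster i start at s i and have length at most pi / a, so they stay inside
  the window [s i, s i + pi / a]; windows of different clusters are disjoint.\<close>

lemma arc_clusters_equally_spaced:
  fixes a w :: nat
  assumes "0 < w"
  defines "s \<equiv> \<lambda>i. 2 * pi * real i / real a" and "d \<equiv> pi / (real a * real w)"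
  defines "Arc \<equiv> \<lambda>i j. circ_arc (s i) (real (Suc j) * d)"
  shows "arc_clusters a w Arc (\<lambda>i. cis (s i))"
proof -
  have window: "0 \<le> s i" "s i + pi / real a < 2 * pi" if "i < a" for i
    using equally_spaced_window[OF that] by (simp_all add: s_def)
  have apart: "s i + pi / real a < s i'" if "i < i'" "i' < a" for i i'
    using equally_spaced_windows_apart[OF that] by (simp add: s_def)
  have d_pos: "0 < d" if "i < a" for i
    using that assms(1) by (simp add: d_def)
  have len: "real (Suc j) * d \<le> pi / real a" if "j < w" for j
  proof -
    have "real (Suc j) * d \<le> real w * d"
      using that by (intro mult_right_mono) (auto simp: d_def)
    then show ?thesis
      using assms(1) by (simp add: d_def)
  qed
  have mem_Arc_iff: "cis t \<in> Arc i j \<longleftrightarrow> s i \<le> t \<and> t \<le> s i + real (Suc j) * d"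
    if "i < a" "j < w" "0 \<le> t" "t < 2 * pi" for i j t
    unfolding Arc_def using that window[OF that(1)] len[OF that(2)]
    by (intro cis_mem_circ_arc_iff) auto
  have centre_mem: "cis (s i) \<in> Arc i j" if "i < a" for i j
    unfolding Arc_def circ_arc_def using d_pos[OF that] by (intro imageI) simp
  have same_cluster: "i = i'"
    if ij: "i < a" "i' < a" "j < w" "j' < w" "z \<in> Arc i j" "z \<in> Arc i' j'" for i i' j j' z
  proof -
    obtain t where t: "z = cis t" "s i \<le> t" "t \<le> s i + pi / real a"
      using ij(5) len[OF ij(3)] by (fastforce simp: Arc_def circ_arc_def)
    then have "s i' \<le> t" "t \<le> s i' + pi / real a"
      using ij window[OF ij(1)] mem_Arc_iff[OF ij(2,4)] len[OF ij(4)] by auto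
    with t show "i = i'"
      using apart ij(1,2) by (metis linorder_neqE_nat not_le order.trans)
  qed
  have distinct_in_cluster: "Arc i j \<noteq> Arc i j'" if "i < a" "j < j'" "j' < w" for i j j'
  proof
    assume "Arc i j = Arc i j'"
    moreover have "cis (s i + real (Suc j') * d) \<in> Arc i j'"
      unfolding Arc_def circ_arc_def using d_pos[OF that(1)] by (intro imageI) simp
    moreover have "s i + real (Suc j') * d < 2 * pi"
      using window[OF that(1)] len[OF that(3)] by simp
    ultimately have "s i + real (Suc j') * d \<le> s i + real (Suc j) * d"
      using mem_Arc_iff[OF that(1), of j] that window[OF that(1)] d_pos[OF that(1)] by simp
    with that(2) d_pos[OF that(1)] show False
      by simp
  qed
  show ?thesis
    unfolding arc_clusters_def using centre_mem same_cluster distinct_in_cluster by blast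
qed

lemma sq_le_8_mult_floor_ceil_half:
  fixes w :: nat
  assumes "2 \<le> w"
  shows "w ^ 2 \<le> 8 * ((w div 2) * (w - w div 2))"
proof -
  from assms have "w \<le> 4 * (w div 2)" "w \<le> 2 * (w - w div 2)"
    by linarith+
  then have "w * w \<le> (4 * (w div 2)) * (2 * (w - w div 2))"
    by (rule mult_le_mono)
  then show ?thesis
    by (simp add: power2_eq_square algebra_simps)
qed

lemma arc_family_with_many_edges:
  assumes "1 \<le> a" "2 \<le> w"
  shows "\<exists>F. finite F \<and> (\<forall>A\<in>F. is_arc A) \<and> indep_number F = a \<and> max_depth F = w \<and>
    real (card (ig_edges F)) \<ge> 1 / 8 * real a * (real w)^2"
proof -
  define s where "s = (\<lambda>i. 2 * pi * real i / real a)"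
  define d where "d = pi / (real a * real w)"
  define Arc where "Arc = (\<lambda>i j. circ_arc (s i) (real (Suc j) * d))"
  define F where "F = cluster_family a w Arc"
  have clusters: "arc_clusters a w Arc (\<lambda>i. cis (s i))"
    using assms(2) unfolding Arc_def s_def d_def by (intro arc_clusters_equally_spaced) simp
  have "is_arc A" if "A \<in> F" for A
  proof -
    from that obtain i j where "j < w" "A = Arc i j"
      unfolding F_def mem_cluster_family_iff by auto
    moreover have "real (Suc j) * d \<le> 2 * pi"
    proof -
      have "real (Suc j) * d \<le> real w * d"
        using \<open>j < w\<close> by (intro mult_right_mono) (auto simp: d_def)
      also have "\<dots> \<le> pi"
        using assms by (simp add: d_def field_simps)
      finally show ?thesis
        using pi_gt_zero by linarith
    qed
    ultimately show ?thesis
      unfolding is_arc_def Arc_def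
      by (intro exI[of _ "s i"] exI[of _ "real (Suc j) * d"]) (simp add: d_def)
  qed
  moreover have "max_depth F = w"
    using assms depth_cluster_family_le[OF clusters] unfolding F_def
    by (intro max_depth_eqI[of "cis (s 0)"] depth_cluster_family_centre[OF clusters]) simp_all
  moreover have "real a * (real w)^2 \<le> 8 * real (card (ig_edges F))"
  proof -
    have "a * w ^ 2 \<le> 8 * card (ig_edges F)"
      using mult_le_mono2[OF sq_le_8_mult_floor_ceil_half[OF assms(2)], of a]
        card_ig_edges_cluster_family[OF clusters]
      by (simp add: F_def algebra_simps)
    then show ?thesis
      by (metis of_nat_le_iff of_nat_mult of_nat_numeral of_nat_power)
  qed
  ultimately show ?thesis
    using assms indep_number_cluster_family[OF clusters] finite_cluster_family
    by (intro exI[of _ F]) (auto simp: F_def)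
qed

lemma card_ig_edges_le_card_mult_max_depth:
  assumes "finite F" "\<forall>A\<in>F. is_arc A"
  shows "card (ig_edges F) \<le> card F * max_depth F"
proof -
  obtain start len where arc: "\<And>A. A \<in> F \<Longrightarrow> A = circ_arc (start A) (len A)"
    using assms(2) unfolding is_arc_def by metis
  define through_start where "through_start A = {B \<in> F. cis (start A) \<in> B}" for A
  have "ig_edges F \<subseteq> (\<Union>A\<in>F. (\<lambda>B. {A, B}) ` through_start A)"
  proof
    fix e assume "e \<in> ig_edges F"
    then obtain A B where e: "e = {A, B}" "A \<in> F" "B \<in> F" "A \<inter> B \<noteq> {}"
      unfolding ig_edges_def by blast
    then have "cis (start A) \<in> B \<or> cis (start B) \<in> A"
      using arc circ_arc_meet_imp_start_mem by metis
    with e show "e \<in> (\<Union>A\<in>F. (\<lambda>B. {A, B}) ` through_start A)"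
      unfolding through_start_def by (auto simp: insert_commute)
  qed
  then have "card (ig_edges F) \<le> card (\<Union>A\<in>F. (\<lambda>B. {A, B}) ` through_start A)"
    using assms(1) by (intro card_mono) (auto simp: through_start_def)
  also have "\<dots> \<le> (\<Sum>A\<in>F. card ((\<lambda>B. {A, B}) ` through_start A))"
    by (rule card_UN_le[OF assms(1)])
  also have "\<dots> \<le> (\<Sum>A\<in>F. card (through_start A))"
    by (intro sum_mono card_image_le) (simp add: through_start_def assms(1))
  also have "\<dots> \<le> (\<Sum>A\<in>F. max_depth F)"
    using depth_le_max_depth[OF assms(1)]
    by (intro sum_mono) (simp add: through_start_def depth_def)
  finally show ?thesis by simp
qed

lemma atLeastAtMost_disjoint_if_right_end_notin:
  fixes l0 h0 l h :: real
  assumes "l0 \<le> h0" "h0 \<le> h" "h0 \<notin> {l..h}"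
  shows "{l0..h0} \<inter> {l..h} = {}"
  using assms by auto

text \<open>The greedy argument: the interval I0 whose right end r is leftmost, together with the
  at most w intervals through r, is removed; every remaining interval lies right of r.\<close>

lemma ex_disjoint_subfamily_intervals:
  fixes G :: "real set set"
  assumes "finite G" "\<And>I. I \<in> G \<Longrightarrow> \<exists>l h. l \<le> h \<and> I = {l..h}"
    and "\<And>t. card {I \<in> G. t \<in> I} \<le> w"
  shows "\<exists>S\<subseteq>G. pairwise (\<lambda>I J. I \<inter> J = {}) S \<and> card G \<le> card S * w"
  using assms
proof (induction G rule: finite_psubset_induct)
  case (psubset G)
  show ?case
  proof (cases "G = {}")
    case True
    then show ?thesis by simp
  next
    case False
    have "Min (Sup ` G) \<in> Sup ` G"
      using False psubset.hyps by (intro Min_in) auto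
    then obtain I0 where I0: "I0 \<in> G" "Sup I0 = Min (Sup ` G)"
      by (metis imageE)
    define r where "r = Sup I0"
    define H where "H = {I \<in> G. r \<in> I}"
    have r_le: "r \<le> Sup I" if "I \<in> G" for I
      using that psubset.hyps by (simp add: r_def I0(2))
    have "I0 \<in> H"
      using psubset.prems(1)[OF I0(1)] I0(1) by (auto simp: H_def r_def)
    have disjoint: "I0 \<inter> I = {}" if "I \<in> G - H" for I
    proof -
      from that have "I \<in> G"
        by simp
      then obtain l h where I: "l \<le> h" "I = {l..h}"
        using psubset.prems(1) by blast
      obtain l0 h0 where I0_eq: "l0 \<le> h0" "I0 = {l0..h0}"
        using psubset.prems(1)[OF I0(1)] by blast
      have "h0 \<le> h" "h0 \<notin> {l..h}"
        using r_le[of I] that I I0_eq by (auto simp: H_def r_def)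
      with I I0_eq show ?thesis
        by (simp add: atLeastAtMost_disjoint_if_right_end_notin)
    qed
    have smaller: "G - H \<subset> G"
      using \<open>I0 \<in> H\<close> I0(1) by (auto simp: H_def)
    have depth_rest: "card {I \<in> G - H. t \<in> I} \<le> w" for t
    proof -
      have "card {I \<in> G - H. t \<in> I} \<le> card {I \<in> G. t \<in> I}"
        using psubset.hyps by (intro card_mono) auto
      with psubset.prems(2)[of t] show ?thesis by simp
    qed
    have "\<exists>S\<subseteq>G - H. pairwise (\<lambda>I J. I \<inter> J = {}) S \<and> card (G - H) \<le> card S * w"
      using psubset.prems(1) by (intro psubset.IH[OF smaller _ depth_rest]) auto
    then obtain S where S: "S \<subseteq> G - H" "pairwise (\<lambda>I J. I \<inter> J = {}) S"
      "card (G - H) \<le> card S * w"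
      by blast
    have "finite S"
      using S(1) psubset.hyps finite_subset by blast
    have "H \<subseteq> G" "finite H"
      using psubset.hyps by (auto simp: H_def)
    then have "card G = card H + card (G - H)"
      using card_Diff_subset[of H G] card_mono[of G H] psubset.hyps by linarith
    also have "\<dots> \<le> w + card S * w"
      using S(3) psubset.prems(2)[of r] by (simp add: H_def)
    also have "\<dots> = card (insert I0 S) * w"
    proof -
      have "I0 \<notin> S"
        using S(1) \<open>I0 \<in> H\<close> by blast
      with \<open>finite S\<close> show ?thesis by simp
    qed
    finally have "card G \<le> card (insert I0 S) * w" .
    moreover have "pairwise (\<lambda>I J. I \<inter> J = {}) (insert I0 S)"
      using S disjoint by (auto simp: pairwise_insert)
    moreover have "insert I0 S \<subseteq> G"
      using S(1) I0(1) by blast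
    ultimately show ?thesis by blast
  qed
qed

definition unroll :: "complex set \<Rightarrow> real set" where
  "unroll A = {t \<in> {0<..<2 * pi}. cis t \<in> A}"

lemma unroll_arc_avoiding_one:
  assumes "is_arc A" "1 \<notin> A"
  shows "\<exists>lo hi. lo \<le> hi \<and> unroll A = {lo..hi}" "cis ` unroll A = A"
proof -
  obtain lo hi where lo_hi: "0 < lo" "lo \<le> hi" "hi < 2 * pi" "A = circ_arc lo (hi - lo)"
    using assms by (rule arc_avoiding_one_obtain_interval)
  have "t \<in> unroll A \<longleftrightarrow> t \<in> {lo..hi}" for t
    using lo_hi cis_mem_circ_arc_iff[of 0 lo "hi - lo" t] by (auto simp: unroll_def)
  then have "unroll A = {lo..hi}"
    by blast
  with lo_hi show "\<exists>lo hi. lo \<le> hi \<and> unroll A = {lo..hi}" "cis ` unroll A = A"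
    by (auto simp: circ_arc_def)
qed

lemma disjoint_if_unroll_disjoint:
  assumes "cis ` unroll A = A" "unroll A \<inter> unroll B = {}"
  shows "A \<inter> B = {}"
proof (rule ccontr)
  assume "A \<inter> B \<noteq> {}"
  then obtain z where "z \<in> cis ` unroll A" "z \<in> B"
    using assms(1) by blast
  then obtain t where "t \<in> unroll A" "cis t \<in> B"
    by blast
  then have "t \<in> unroll A \<inter> unroll B"
    by (simp add: unroll_def)
  with assms(2) show False
    by simp
qed

lemma ex_disjoint_subfamily_arcs_avoiding_one:
  assumes "finite F" "\<And>A. A \<in> F \<Longrightarrow> is_arc A \<and> 1 \<notin> A"
    and "\<And>t. card {A \<in> F. cis t \<in> A} \<le> w"
  shows "\<exists>S\<subseteq>F. pairwise (\<lambda>A B. A \<inter> B = {}) S \<and> card F \<le> card S * w"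
proof -
  have cis_unroll: "cis ` unroll A = A" if "A \<in> F" for A
    using assms(2)[OF that] unroll_arc_avoiding_one by blast
  then have inj: "inj_on unroll F"
    by (metis inj_onI)
  have "card {I \<in> unroll ` F. t \<in> I} \<le> w" for t
  proof -
    have "{I \<in> unroll ` F. t \<in> I} \<subseteq> unroll ` {A \<in> F. cis t \<in> A}"
      by (auto simp: unroll_def)
    then have "card {I \<in> unroll ` F. t \<in> I} \<le> card (unroll ` {A \<in> F. cis t \<in> A})"
      using assms(1) by (intro card_mono) auto
    also have "\<dots> \<le> card {A \<in> F. cis t \<in> A}"
      using assms(1) by (intro card_image_le) simp
    finally show ?thesis
      using assms(3) by (rule le_trans)
  qed
  then have "\<exists>S\<subseteq>unroll ` F. pairwise (\<lambda>I J. I \<inter> J = {}) S \<and> card (unroll ` F) \<le> card S * w"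
    using assms(1,2) unroll_arc_avoiding_one(1)
    by (intro ex_disjoint_subfamily_intervals) auto
  then obtain S where S: "S \<subseteq> unroll ` F" "pairwise (\<lambda>I J. I \<inter> J = {}) S"
    "card (unroll ` F) \<le> card S * w"
    by blast
  define S' where "S' = {A \<in> F. unroll A \<in> S}"
  have "S' \<subseteq> F"
    by (simp add: S'_def)
  have "unroll ` S' = S"
    using S(1) by (auto simp: S'_def)
  then have card_S': "card S' = card S"
    using inj_on_subset[OF inj \<open>S' \<subseteq> F\<close>] card_image by metis
  have "pairwise (\<lambda>A B. A \<inter> B = {}) S'"
  proof (rule pairwiseI)
    fix A B assume AB: "A \<in> S'" "B \<in> S'" "A \<noteq> B"
    then have "unroll A \<noteq> unroll B"
      using inj \<open>S' \<subseteq> F\<close> by (meson inj_on_def subsetD)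
    moreover have "unroll A \<in> S" "unroll B \<in> S"
      using AB by (simp_all add: S'_def)
    ultimately have "unroll A \<inter> unroll B = {}"
      using S(2) by (simp add: pairwise_def)
    moreover have "cis ` unroll A = A"
      using AB cis_unroll by (simp add: S'_def)
    ultimately show "A \<inter> B = {}"
      by (intro disjoint_if_unroll_disjoint)
  qed
  moreover have "card F \<le> card S' * w"
    using S(3) card_S' card_image[OF inj] by simp
  ultimately show ?thesis
    using \<open>S' \<subseteq> F\<close> by blast
qed

lemma card_le_indep_number_mult_max_depth:
  assumes "finite F" "\<forall>A\<in>F. is_arc A"
  shows "card F \<le> 2 * indep_number F * max_depth F"
proof (cases "F = {}")
  case False
  define F1 where "F1 = {A \<in> F. 1 \<in> A}"
  have "card F1 \<le> max_depth F"
    using depth_le_max_depth[OF assms(1), of 1] by (simp add: F1_def depth_def)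
  have "card {A \<in> F - F1. cis t \<in> A} \<le> max_depth F" for t
  proof -
    have "card {A \<in> F - F1. cis t \<in> A} \<le> depth F (cis t)"
      unfolding depth_def using assms(1) by (intro card_mono) auto
    moreover have "depth F (cis t) \<le> max_depth F"
      using assms(1) by (intro depth_le_max_depth) auto
    ultimately show ?thesis by (rule le_trans)
  qed
  then have "\<exists>S\<subseteq>F - F1. pairwise (\<lambda>A B. A \<inter> B = {}) S \<and> card (F - F1) \<le> card S * max_depth F"
    using assms by (intro ex_disjoint_subfamily_arcs_avoiding_one) (auto simp: F1_def)
  then obtain S where "S \<subseteq> F - F1" "pairwise (\<lambda>A B. A \<inter> B = {}) S"
    "card (F - F1) \<le> card S * max_depth F"
    by blast
  moreover from this have "card S \<le> indep_number F"
    using card_le_indep_number[OF assms(1)] by blast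
  ultimately have "card (F - F1) \<le> indep_number F * max_depth F"
    by (meson le_trans mult_le_mono1)
  moreover have "card F = card F1 + card (F - F1)"
    using assms(1) card_Diff_subset[of F1 F] card_mono[of F F1] by (auto simp: F1_def)
  moreover have "max_depth F \<le> indep_number F * max_depth F"
    using indep_number_pos[OF assms(1) False] by simp
  ultimately show ?thesis
    using \<open>card F1 \<le> max_depth F\<close> by linarith
qed simp

lemma card_ig_edges_le_indep_number_max_depth_sq:
  assumes "finite F" "\<forall>A\<in>F. is_arc A"
  shows "real (card (ig_edges F)) \<le> 2 * real (indep_number F) * (real (max_depth F))^2"
proof -
  have "card (ig_edges F) \<le> card F * max_depth F"
    using card_ig_edges_le_card_mult_max_depth[OF assms] .
  also have "\<dots> \<le> 2 * indep_number F * max_depth F * max_depth F"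
    using card_le_indep_number_mult_max_depth[OF assms] by simp
  finally have "card (ig_edges F) \<le> 2 * indep_number F * max_depth F ^ 2"
    by (simp add: power2_eq_square mult.assoc)
  then show ?thesis
    by (metis of_nat_le_iff of_nat_mult of_nat_numeral of_nat_power)
qed

theorem lemma2p4:
  shows "(\<exists>C::real. C > 0 \<and>
            (\<forall>F. finite F \<and> (\<forall>A\<in>F. is_arc A) \<longrightarrow>
               real (card (ig_edges F))
                 \<le> C * real (indep_number F) * (real (max_depth F))^2))
       \<and> (\<exists>c::real. c > 0 \<and>
            (\<forall>a w::nat. 1 \<le> a \<and> 2 \<le> w \<longrightarrow>
               (\<exists>F. finite F \<and> (\<forall>A\<in>F. is_arc A) \<and>
                    indep_number F = a \<and> max_depth F = w \<and>
                    real (card (ig_edges F)) \<ge> c * real a * (real w)^2)))"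
  by (rule conjI[OF exI[of _ 2] exI[of _ "1 / 8"]])
    (use card_ig_edges_le_indep_number_max_depth_sq arc_family_with_many_edges in auto)

end
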